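(* Let $X,Y$ be countable discrete metric spaces and $d,d'\in D(X,Y)$. Consider the conditions: (i) $d$ and $d'$ are coarsely equivalent, i.e. there is a nondecreasing function $\varphi:[0,\infty)\to[0,\infty)$ with $d'(x,y)\le\varphi(d(x,y))$ and $d(x,y)\le\varphi(d'(x,y))$ for all $x\in X$, $y\in Y$; (ii) $M_{d'}(X,Y)=M_d(X,Y)$. Then (i) implies (ii). If moreover $X$ and $Y$ are uniformly discrete ($\inf_{x\ne x'}d_X(x,x')>0$, similarly for $Y$) and proper (every ball contains finitely many points), then (ii) implies (i).
   Context: $H_X=l^2(X)$ with basis $\{\delta_x\}$. $D(X,Y)$ is the set of metrics on $X\sqcup Y$ restricting to $d_X$ and $d_Y$. For $T:H_X\to H_Y$ bounded, $T_{yx}=\langle T\delta_x,\delta_y\rangle$; $T$ has propagation less than $L$ w.r.t. $d$ if $T_{yx}=0$ whenever $d(x,y)\ge L$. $M_d(X,Y)$ is the norm closure in $\mathbb B(H_X,H_Y)$ of the bounded operators of finite propagation w.r.t. $d$. *)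

theory Defs
  imports "HOL-Analysis.Analysis"
begin

definition metric_on :: "'a set \<Rightarrow> ('a \<Rightarrow> 'a \<Rightarrow> real) \<Rightarrow> bool" where
  "metric_on S d \<longleftrightarrow>
     (\<forall>x\<in>S. \<forall>y\<in>S. d x y \<ge> 0 \<and> (d x y = 0 \<longleftrightarrow> x = y) \<and> d x y = d y x) \<and>
     (\<forall>x\<in>S. \<forall>y\<in>S. \<forall>z\<in>S. d x z \<le> d x y + d y z)"

definition discrete_metric_on :: "'a set \<Rightarrow> ('a \<Rightarrow> 'a \<Rightarrow> real) \<Rightarrow> bool" where
  "discrete_metric_on S d \<longleftrightarrow> metric_on S d \<and>
     (\<forall>x\<in>S. \<exists>e>0. \<forall>x'\<in>S. d x x' < e \<longrightarrow> x' = x)"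

definition uniformly_discrete_on :: "'a set \<Rightarrow> ('a \<Rightarrow> 'a \<Rightarrow> real) \<Rightarrow> bool" where
  "uniformly_discrete_on S d \<longleftrightarrow> (\<exists>c>0. \<forall>x\<in>S. \<forall>x'\<in>S. x \<noteq> x' \<longrightarrow> c \<le> d x x')"

definition proper_on :: "'a set \<Rightarrow> ('a \<Rightarrow> 'a \<Rightarrow> real) \<Rightarrow> bool" where
  "proper_on S d \<longleftrightarrow> (\<forall>x\<in>S. \<forall>r. finite {x'\<in>S. d x x' \<le> r})"

definition Dmetrics :: "'a set \<Rightarrow> ('a \<Rightarrow> 'a \<Rightarrow> real) \<Rightarrow> 'b set \<Rightarrow> ('b \<Rightarrow> 'b \<Rightarrow> real)
    \<Rightarrow> (('a + 'b) \<Rightarrow> ('a + 'b) \<Rightarrow> real) set" where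
  "Dmetrics X dX Y dY = {d. metric_on (Inl ` X \<union> Inr ` Y) d \<and>
      (\<forall>x\<in>X. \<forall>x'\<in>X. d (Inl x) (Inl x') = dX x x') \<and>
      (\<forall>y\<in>Y. \<forall>y'\<in>Y. d (Inr y) (Inr y') = dY y y')}"

definition l2vec :: "'a set \<Rightarrow> ('a \<Rightarrow> complex) \<Rightarrow> bool" where
  "l2vec X f \<longleftrightarrow> (\<forall>x. x \<notin> X \<longrightarrow> f x = 0) \<and> (\<lambda>x. (cmod (f x))\<^sup>2) summable_on X"

definition l2norm :: "'a set \<Rightarrow> ('a \<Rightarrow> complex) \<Rightarrow> real" where
  "l2norm X f = sqrt (\<Sum>\<^sub>\<infinity>x\<in>X. (cmod (f x))\<^sup>2)"

text \<open>Operators H_X \<rightarrow> H_Y are represented by their matrices T y x = T_{yx} = <T \<delta>_x, \<delta>_y>.\<close>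
definition op_apply :: "'a set \<Rightarrow> ('b \<Rightarrow> 'a \<Rightarrow> complex) \<Rightarrow> ('a \<Rightarrow> complex) \<Rightarrow> ('b \<Rightarrow> complex)" where
  "op_apply X T f = (\<lambda>y. \<Sum>\<^sub>\<infinity>x\<in>X. T y x * f x)"

text \<open>A matrix defines a bounded operator l^2(X) \<rightarrow> l^2(Y) (and every bounded operator
  arises this way from its matrix).\<close>
definition bounded_op :: "'a set \<Rightarrow> 'b set \<Rightarrow> ('b \<Rightarrow> 'a \<Rightarrow> complex) \<Rightarrow> bool" where
  "bounded_op X Y T \<longleftrightarrow> (\<forall>y x. y \<notin> Y \<or> x \<notin> X \<longrightarrow> T y x = 0) \<and>
     (\<exists>C. \<forall>f. l2vec X f \<longrightarrow>
        (\<forall>y\<in>Y. (\<lambda>x. T y x * f x) summable_on X) \<and>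
        l2vec Y (op_apply X T f) \<and> l2norm Y (op_apply X T f) \<le> C * l2norm X f)"

definition opnorm :: "'a set \<Rightarrow> 'b set \<Rightarrow> ('b \<Rightarrow> 'a \<Rightarrow> complex) \<Rightarrow> real" where
  "opnorm X Y T = Sup {l2norm Y (op_apply X T f) | f. l2vec X f \<and> l2norm X f \<le> 1}"

definition finite_propagation :: "'a set \<Rightarrow> 'b set \<Rightarrow> (('a + 'b) \<Rightarrow> ('a + 'b) \<Rightarrow> real)
    \<Rightarrow> ('b \<Rightarrow> 'a \<Rightarrow> complex) \<Rightarrow> bool" where
  "finite_propagation X Y d T \<longleftrightarrow>
     (\<exists>L. \<forall>x\<in>X. \<forall>y\<in>Y. d (Inl x) (Inr y) \<ge> L \<longrightarrow> T y x = 0)"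

definition Md :: "'a set \<Rightarrow> 'b set \<Rightarrow> (('a + 'b) \<Rightarrow> ('a + 'b) \<Rightarrow> real)
    \<Rightarrow> ('b \<Rightarrow> 'a \<Rightarrow> complex) set" where
  "Md X Y d = {T. bounded_op X Y T \<and>
      (\<forall>e>0. \<exists>S. bounded_op X Y S \<and> finite_propagation X Y d S \<and>
                  opnorm X Y (\<lambda>y x. T y x - S y x) < e)}"

definition coarsely_equivalent :: "'a set \<Rightarrow> 'b set \<Rightarrow> (('a + 'b) \<Rightarrow> ('a + 'b) \<Rightarrow> real)
    \<Rightarrow> (('a + 'b) \<Rightarrow> ('a + 'b) \<Rightarrow> real) \<Rightarrow> bool" where
  "coarsely_equivalent X Y d d' \<longleftrightarrow>
     (\<exists>\<phi>::real \<Rightarrow> real. mono_on {0..} \<phi> \<and> (\<forall>t\<ge>0. \<phi> t \<ge> 0) \<and>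
        (\<forall>x\<in>X. \<forall>y\<in>Y. d' (Inl x) (Inr y) \<le> \<phi> (d (Inl x) (Inr y)) \<and>
                        d (Inl x) (Inr y) \<le> \<phi> (d' (Inl x) (Inr y))))"

end

theory Submission
  imports Defs
begin

text \<open>
  If \<open>d' \<le> \<phi> \<circ> d\<close> with \<open>\<phi>\<close> monotone, every operator of finite \<open>d\<close>-propagation has
  finite \<open>d'\<close>-propagation, so coarse equivalence gives equal closures. Conversely, suppose
  \<open>d'\<close> is unbounded on the pairs with \<open>d \<le> t\<close>. Properness makes every row and column of
  this set finite, so one can greedily pick infinitely many such pairs, no two in a common row
  or column, along which \<open>d'\<close> is unbounded. The 0-1 matrix of this partial matching is a
  contraction of \<open>d\<close>-propagation at most \<open>t\<close>, hence lies in \<open>M\<^sub>d = M\<^sub>d\<^sub>'\<close>; but the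
  entries of operators in \<open>M\<^sub>d\<^sub>'\<close> tend to 0 as \<open>d'\<close> grows, while its entries are 1. The bounds
  on \<open>d'\<close> over \<open>{d \<le> t}\<close> and on \<open>d\<close> over \<open>{d' \<le> t}\<close> then define the control function.
\<close>

lemma infsum_diff:
  fixes f g :: "'a \<Rightarrow> 'b::{topological_ab_group_add, t2_space}"
  assumes "f summable_on A" and "g summable_on A"
  shows "(\<Sum>\<^sub>\<infinity>x\<in>A. f x - g x) = infsum f A - infsum g A"
  using infsum_add[of f A "\<lambda>x. - g x"] assms summable_on_uminus[of g A] infsum_uminus[of g A]
  by simp

lemma summable_on_diff:
  fixes f g :: "'a \<Rightarrow> 'b::{topological_ab_group_add}"
  assumes "f summable_on A" and "g summable_on A"
  shows "(\<lambda>x. f x - g x) summable_on A"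
  using summable_on_add[of f A "\<lambda>x. - g x"] assms summable_on_uminus[of g A] by simp

lemma l2norm_nonneg: "l2norm X f \<ge> 0"
  unfolding l2norm_def by (simp add: infsum_nonneg)

lemma l2norm_squared: "(l2norm X f)\<^sup>2 = (\<Sum>\<^sub>\<infinity>x\<in>X. (cmod (f x))\<^sup>2)"
  unfolding l2norm_def by (simp add: infsum_nonneg)

lemma cmod_diff_squared_le: "(cmod (a - b))\<^sup>2 \<le> 2 * (cmod a)\<^sup>2 + 2 * (cmod b)\<^sup>2"
proof -
  have "(cmod (a - b))\<^sup>2 \<le> (cmod a + cmod b)\<^sup>2"
    by (simp add: norm_triangle_ineq4 power_mono)
  also have "\<dots> \<le> 2 * (cmod a)\<^sup>2 + 2 * (cmod b)\<^sup>2"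
    using zero_le_power2[of "cmod a - cmod b"] by (simp add: power2_eq_square algebra_simps)
  finally show ?thesis .
qed

lemma l2vec_diff:
  assumes f: "l2vec X f" and g: "l2vec X g"
  shows "l2vec X (\<lambda>x. f x - g x)"
    and "(l2norm X (\<lambda>x. f x - g x))\<^sup>2 \<le> 2 * (l2norm X f)\<^sup>2 + 2 * (l2norm X g)\<^sup>2"
proof -
  have fs: "(\<lambda>x. (cmod (f x))\<^sup>2) summable_on X" and gs: "(\<lambda>x. (cmod (g x))\<^sup>2) summable_on X"
    using f g unfolding l2vec_def by auto
  have bs: "(\<lambda>x. 2 * (cmod (f x))\<^sup>2 + 2 * (cmod (g x))\<^sup>2) summable_on X"
    by (intro summable_on_add summable_on_cmult_right fs gs)
  have ds: "(\<lambda>x. (cmod (f x - g x))\<^sup>2) summable_on X"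
    by (rule summable_on_comparison_test[OF bs]) (auto simp: cmod_diff_squared_le)
  then show "l2vec X (\<lambda>x. f x - g x)"
    using f g unfolding l2vec_def by auto
  have "(l2norm X (\<lambda>x. f x - g x))\<^sup>2 \<le> (\<Sum>\<^sub>\<infinity>x\<in>X. 2 * (cmod (f x))\<^sup>2 + 2 * (cmod (g x))\<^sup>2)"
    unfolding l2norm_squared by (rule infsum_mono[OF ds bs]) (rule cmod_diff_squared_le)
  also have "\<dots> = 2 * (l2norm X f)\<^sup>2 + 2 * (l2norm X g)\<^sup>2"
    unfolding l2norm_squared
    using infsum_add[OF summable_on_cmult_right[OF fs] summable_on_cmult_right[OF gs]]
    by (simp add: infsum_cmult_right' fs gs)
  finally show "(l2norm X (\<lambda>x. f x - g x))\<^sup>2 \<le> 2 * (l2norm X f)\<^sup>2 + 2 * (l2norm X g)\<^sup>2" .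
qed

lemma l2vec_indicator:
  assumes "x \<in> X"
  shows "l2vec X (indicator {x})" and "l2norm X (indicator {x}) = 1"
proof -
  have "(\<lambda>x'. (cmod (indicator {x} x' :: complex))\<^sup>2) summable_on X"
    by (rule finite_nonzero_values_imp_summable_on, rule finite_subset[of _ "{x}"]) (auto simp: indicator_def)
  then show "l2vec X (indicator {x})"
    using assms unfolding l2vec_def by (auto simp: indicator_def)
  have "(\<Sum>\<^sub>\<infinity>x'\<in>X. (cmod (indicator {x} x' :: complex))\<^sup>2) = (\<Sum>\<^sub>\<infinity>x'\<in>{x}. (cmod (indicator {x} x' :: complex))\<^sup>2)"
    by (rule infsum_cong_neutral) (use assms in auto)
  then show "l2norm X (indicator {x}) = 1"
    unfolding l2norm_def by simp
qed

lemma op_apply_indicator: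
  assumes "x \<in> X"
  shows "op_apply X U (indicator {x}) = (\<lambda>y. U y x)"
proof
  fix y
  have "(\<Sum>\<^sub>\<infinity>x'\<in>X. U y x' * indicator {x} x') = (\<Sum>\<^sub>\<infinity>x'\<in>{x}. U y x' * indicator {x} x')"
    by (rule infsum_cong_neutral) (use assms in auto)
  then show "op_apply X U (indicator {x}) y = U y x"
    unfolding op_apply_def by simp
qed

lemma bounded_opE:
  assumes "bounded_op X Y T"
  obtains C where "C \<ge> 0" and "\<And>f. l2vec X f \<Longrightarrow>
      (\<forall>y\<in>Y. (\<lambda>x. T y x * f x) summable_on X) \<and>
      l2vec Y (op_apply X T f) \<and> l2norm Y (op_apply X T f) \<le> C * l2norm X f"
proof -
  obtain C where C: "\<And>f. l2vec X f \<Longrightarrow>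
      (\<forall>y\<in>Y. (\<lambda>x. T y x * f x) summable_on X) \<and>
      l2vec Y (op_apply X T f) \<and> l2norm Y (op_apply X T f) \<le> C * l2norm X f"
    using assms unfolding bounded_op_def by blast
  have "C * l2norm X f \<le> max C 0 * l2norm X f" for f
    by (intro mult_right_mono) (auto simp: l2norm_nonneg)
  with C show ?thesis
    by (intro that[of "max C 0"]) (auto intro: order_trans)
qed

lemma op_apply_diff:
  assumes T: "bounded_op X Y T" and S: "bounded_op X Y S"
    and "\<forall>y\<in>Y. (\<lambda>x. T y x * f x) summable_on X" and "\<forall>y\<in>Y. (\<lambda>x. S y x * f x) summable_on X"
  shows "op_apply X (\<lambda>y x. T y x - S y x) f = (\<lambda>y. op_apply X T f y - op_apply X S f y)"
proof
  fix y
  show "op_apply X (\<lambda>y x. T y x - S y x) f y = op_apply X T f y - op_apply X S f y"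
  proof (cases "y \<in> Y")
    case True
    then show ?thesis
      unfolding op_apply_def left_diff_distrib using assms(3,4)
      by (intro infsum_diff) auto
  next
    case False
    then have "T y x = 0" "S y x = 0" for x
      using T S unfolding bounded_op_def by auto
    then show ?thesis
      unfolding op_apply_def by simp
  qed
qed

lemma bounded_op_diff:
  assumes T: "bounded_op X Y T" and S: "bounded_op X Y S"
  shows "bounded_op X Y (\<lambda>y x. T y x - S y x)"
proof -
  obtain CT where CT: "\<And>f. l2vec X f \<Longrightarrow>
      (\<forall>y\<in>Y. (\<lambda>x. T y x * f x) summable_on X) \<and>
      l2vec Y (op_apply X T f) \<and> l2norm Y (op_apply X T f) \<le> CT * l2norm X f"
    using bounded_opE[OF T] by metis
  obtain CS where CS: "\<And>f. l2vec X f \<Longrightarrow>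
      (\<forall>y\<in>Y. (\<lambda>x. S y x * f x) summable_on X) \<and>
      l2vec Y (op_apply X S f) \<and> l2norm Y (op_apply X S f) \<le> CS * l2norm X f"
    using bounded_opE[OF S] by metis
  define C where "C = sqrt (2 * CT\<^sup>2 + 2 * CS\<^sup>2)"
  have "(\<forall>y\<in>Y. (\<lambda>x. (T y x - S y x) * f x) summable_on X) \<and>
      l2vec Y (op_apply X (\<lambda>y x. T y x - S y x) f) \<and>
      l2norm Y (op_apply X (\<lambda>y x. T y x - S y x) f) \<le> C * l2norm X f"
    if f: "l2vec X f" for f
  proof -
    note Tf = CT[OF f] and Sf = CS[OF f]
    let ?g = "op_apply X T f" and ?h = "op_apply X S f"
    have eq: "op_apply X (\<lambda>y x. T y x - S y x) f = (\<lambda>y. ?g y - ?h y)"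
      using op_apply_diff[OF T S] Tf Sf by blast
    have "(l2norm Y ?g)\<^sup>2 \<le> (CT * l2norm X f)\<^sup>2" "(l2norm Y ?h)\<^sup>2 \<le> (CS * l2norm X f)\<^sup>2"
      using Tf Sf l2norm_nonneg by (auto intro: power_mono)
    then have "(l2norm Y (\<lambda>y. ?g y - ?h y))\<^sup>2 \<le> 2 * (CT * l2norm X f)\<^sup>2 + 2 * (CS * l2norm X f)\<^sup>2"
      using l2vec_diff(2)[of Y ?g ?h] Tf Sf by linarith
    also have "\<dots> = (C * l2norm X f)\<^sup>2"
      by (simp add: C_def power_mult_distrib distrib_right)
    finally have "(l2norm Y (\<lambda>y. ?g y - ?h y))\<^sup>2 \<le> (C * l2norm X f)\<^sup>2" .
    then have "l2norm Y (\<lambda>y. ?g y - ?h y) \<le> C * l2norm X f"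
      by (rule power2_le_imp_le) (simp add: C_def l2norm_nonneg)
    moreover have "\<forall>y\<in>Y. (\<lambda>x. (T y x - S y x) * f x) summable_on X"
      unfolding left_diff_distrib using Tf Sf by (auto intro!: summable_on_diff)
    ultimately show ?thesis
      unfolding eq using l2vec_diff(1)[of Y ?g ?h] Tf Sf by blast
  qed
  moreover have "\<forall>y x. y \<notin> Y \<or> x \<notin> X \<longrightarrow> T y x - S y x = 0"
    using T S unfolding bounded_op_def by auto
  ultimately show ?thesis
    unfolding bounded_op_def by blast
qed

lemma opnorm_upper:
  assumes U: "bounded_op X Y U" and f: "l2vec X f" "l2norm X f \<le> 1"
  shows "l2norm Y (op_apply X U f) \<le> opnorm X Y U"
proof -
  obtain C where "C \<ge> 0" and C: "\<And>f. l2vec X f \<Longrightarrow>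
      (\<forall>y\<in>Y. (\<lambda>x. U y x * f x) summable_on X) \<and>
      l2vec Y (op_apply X U f) \<and> l2norm Y (op_apply X U f) \<le> C * l2norm X f"
    using bounded_opE[OF U] by metis
  have bound: "l2norm Y (op_apply X U g) \<le> C" if "l2vec X g" "l2norm X g \<le> 1" for g
    using C[OF that(1)] mult_left_le[OF that(2) \<open>C \<ge> 0\<close>] by linarith
  show ?thesis
    unfolding opnorm_def
  proof (rule cSup_upper)
    show "l2norm Y (op_apply X U f) \<in> {l2norm Y (op_apply X U g) |g. l2vec X g \<and> l2norm X g \<le> 1}"
      using f by blast
    show "bdd_above {l2norm Y (op_apply X U g) |g. l2vec X g \<and> l2norm X g \<le> 1}"
      by (rule bdd_aboveI[of _ C]) (use bound in blast)
  qed
qed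

lemma entry_le_opnorm:
  assumes U: "bounded_op X Y U" and x: "x \<in> X" and y: "y \<in> Y"
  shows "cmod (U y x) \<le> opnorm X Y U"
proof -
  have "l2vec Y (op_apply X U (indicator {x}))"
    using U l2vec_indicator(1)[OF x] unfolding bounded_op_def by blast
  then have "l2vec Y (\<lambda>y'. U y' x)"
    unfolding op_apply_indicator[OF x] .
  then have "(cmod (U y x))\<^sup>2 \<le> (\<Sum>\<^sub>\<infinity>y'\<in>Y. (cmod (U y' x))\<^sup>2)"
    using finite_sum_le_infsum[of "\<lambda>y'. (cmod (U y' x))\<^sup>2" Y "{y}"] y
    unfolding l2vec_def by simp
  then have "cmod (U y x) \<le> l2norm Y (op_apply X U (indicator {x}))"
    unfolding op_apply_indicator[OF x] l2norm_def by (rule real_le_rsqrt)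
  also have "\<dots> \<le> opnorm X Y U"
    using opnorm_upper[OF U l2vec_indicator(1)[OF x]] l2vec_indicator(2)[OF x] by simp
  finally show ?thesis .
qed

lemma opnorm_zero: "opnorm X Y (\<lambda>y x. 0) = 0"
proof -
  have zero: "l2norm Y (op_apply X (\<lambda>y x. 0) f) = 0" for f
    by (simp add: l2norm_def op_apply_def)
  have "l2vec X (\<lambda>x. 0)" and "l2norm X (\<lambda>x. 0) \<le> 1"
    unfolding l2vec_def l2norm_def by auto
  then have "{l2norm Y (op_apply X (\<lambda>y x. 0) f) |f. l2vec X f \<and> l2norm X f \<le> 1} = {0}"
    unfolding zero by blast
  then show ?thesis
    unfolding opnorm_def by simp
qed

lemma finite_propagation_in_Md:
  assumes "bounded_op X Y T" and "finite_propagation X Y d T"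
  shows "T \<in> Md X Y d"
  unfolding Md_def using assms opnorm_zero[of X Y] by (auto intro!: exI[of _ T])

lemma Md_entries_decay:
  assumes "T \<in> Md X Y d" and "e > 0"
  obtains L where "\<And>x y. x \<in> X \<Longrightarrow> y \<in> Y \<Longrightarrow> L \<le> d (Inl x) (Inr y) \<Longrightarrow> cmod (T y x) < e"
proof -
  obtain S where T: "bounded_op X Y T" and S: "bounded_op X Y S"
    and "finite_propagation X Y d S" and close: "opnorm X Y (\<lambda>y x. T y x - S y x) < e"
    using assms unfolding Md_def by blast
  then obtain L where L: "\<forall>x\<in>X. \<forall>y\<in>Y. L \<le> d (Inl x) (Inr y) \<longrightarrow> S y x = 0"
    unfolding finite_propagation_def by blast
  show ?thesis
  proof (rule that)
    fix x y assume "x \<in> X" "y \<in> Y" "L \<le> d (Inl x) (Inr y)"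
    then have "S y x = 0"
      using L by blast
    then have "cmod (T y x) \<le> opnorm X Y (\<lambda>y x. T y x - S y x)"
      using entry_le_opnorm[OF bounded_op_diff[OF T S] \<open>x \<in> X\<close> \<open>y \<in> Y\<close>] by simp
    then show "cmod (T y x) < e"
      using close by linarith
  qed
qed

definition matching_op :: "('a \<times> 'b) set \<Rightarrow> 'b \<Rightarrow> 'a \<Rightarrow> complex" where
  "matching_op P = (\<lambda>y x. if (x, y) \<in> P then 1 else 0)"

lemma matching_op_row:
  assumes "inj_on snd P" and "(x, y) \<in> P"
  shows "matching_op P y = indicator {x}"
proof
  fix x'
  have "(x', y) \<in> P \<longleftrightarrow> x' = x"
    using assms inj_onD[OF assms(1), of "(x', y)" "(x, y)"] by auto
  then show "matching_op P y x' = indicator {x} x'"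
    unfolding matching_op_def by simp
qed

lemma matching_op_row_zero:
  assumes "y \<notin> snd ` P"
  shows "matching_op P y = (\<lambda>x. 0)"
  using assms unfolding matching_op_def by force

lemma matching_op_row_summable:
  assumes "inj_on snd P"
  shows "(\<lambda>x. matching_op P y x * f x) summable_on X"
proof (cases "y \<in> snd ` P")
  case True
  then obtain x where "(x, y) \<in> P"
    by force
  show ?thesis
    by (rule finite_nonzero_values_imp_summable_on, rule finite_subset[of _ "{x}"])
      (auto simp: matching_op_row[OF assms \<open>(x, y) \<in> P\<close>] indicator_def)
next
  case False
  then show ?thesis
    unfolding matching_op_row_zero[OF False] by simp
qed

lemma op_apply_matching_op:
  assumes "inj_on snd P" and "(x, y) \<in> P" and "x \<in> X"
  shows "op_apply X (matching_op P) f y = f x"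
proof -
  have "(\<Sum>\<^sub>\<infinity>x'\<in>X. indicator {x} x' * f x') = (\<Sum>\<^sub>\<infinity>x'\<in>{x}. indicator {x} x' * f x')"
    by (rule infsum_cong_neutral) (use \<open>x \<in> X\<close> in auto)
  then show ?thesis
    unfolding op_apply_def matching_op_row[OF assms(1,2)] by simp
qed

lemma matching_op_contraction:
  assumes P: "P \<subseteq> X \<times> Y" and fst: "inj_on fst P" and snd: "inj_on snd P" and f: "l2vec X f"
  shows "l2vec Y (op_apply X (matching_op P) f)"
    and "l2norm Y (op_apply X (matching_op P) f) \<le> l2norm X f"
proof -
  define g where "g x = (cmod (f x))\<^sup>2" for x
  define h where "h y = (cmod (op_apply X (matching_op P) f y))\<^sup>2" for y
  have "snd ` P \<subseteq> Y"
    using P by auto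
  have outside: "op_apply X (matching_op P) f y = 0" if "y \<notin> snd ` P" for y
    unfolding op_apply_def matching_op_row_zero[OF that] by simp
  have along: "(h \<circ> snd) q = (g \<circ> fst) q" if "q \<in> P" for q
    using op_apply_matching_op[OF snd, of "fst q" "snd q" X f] that P by (auto simp: g_def h_def)
  have "g summable_on X"
    using f unfolding l2vec_def g_def by simp
  then have "g summable_on fst ` P"
    by (rule summable_on_subset_banach) (use P in auto)
  then have "h summable_on snd ` P"
    by (simp only: summable_on_reindex fst snd summable_on_cong[OF along])
  moreover have "h summable_on Y \<longleftrightarrow> h summable_on snd ` P"
    by (rule summable_on_cong_neutral) (use \<open>snd ` P \<subseteq> Y\<close> outside in \<open>auto simp: h_def\<close>)
  ultimately show "l2vec Y (op_apply X (matching_op P) f)"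
    using outside \<open>snd ` P \<subseteq> Y\<close> unfolding l2vec_def h_def by blast
  have "infsum h Y = infsum h (snd ` P)"
    by (rule infsum_cong_neutral) (use \<open>snd ` P \<subseteq> Y\<close> outside in \<open>auto simp: h_def\<close>)
  also have "\<dots> = infsum g (fst ` P)"
    by (simp only: infsum_reindex fst snd infsum_cong[OF along])
  also have "\<dots> \<le> infsum g X"
    by (rule infsum_mono_neutral[OF \<open>g summable_on fst ` P\<close> \<open>g summable_on X\<close>])
      (use P in \<open>auto simp: g_def\<close>)
  finally show "l2norm Y (op_apply X (matching_op P) f) \<le> l2norm X f"
    unfolding l2norm_def h_def g_def by simp
qed

lemma bounded_matching_op:
  assumes "P \<subseteq> X \<times> Y" and "inj_on fst P" and "inj_on snd P"
  shows "bounded_op X Y (matching_op P)"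
proof -
  have "\<forall>y x. y \<notin> Y \<or> x \<notin> X \<longrightarrow> matching_op P y x = 0"
    using assms(1) unfolding matching_op_def by auto
  then show ?thesis
    unfolding bounded_op_def
    using matching_op_row_summable[OF assms(3)] matching_op_contraction[OF assms]
    by (intro conjI exI[of _ 1]) auto
qed

lemma exists_far_pair_avoiding:
  fixes Q :: "('a \<times> 'b) set" and w :: "'a \<times> 'b \<Rightarrow> real"
  assumes rows: "\<And>a. finite {b. (a, b) \<in> Q}" and columns: "\<And>b. finite {a. (a, b) \<in> Q}"
    and unbounded: "\<not> bdd_above (w ` Q)" and "finite A" and "finite B"
  shows "\<exists>q\<in>Q. fst q \<notin> A \<and> snd q \<notin> B \<and> L \<le> w q"
proof -
  define G where "G = {q \<in> Q. fst q \<in> A \<or> snd q \<in> B}"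
  have "G \<subseteq> (\<Union>a\<in>A. {a} \<times> {b. (a, b) \<in> Q}) \<union> (\<Union>b\<in>B. {a. (a, b) \<in> Q} \<times> {b})"
    unfolding G_def by force
  moreover have "finite ((\<Union>a\<in>A. {a} \<times> {b. (a, b) \<in> Q}) \<union> (\<Union>b\<in>B. {a. (a, b) \<in> Q} \<times> {b}))"
    using rows columns \<open>finite A\<close> \<open>finite B\<close> by blast
  ultimately have "finite G"
    by (rule finite_subset)
  define M where "M = Max (insert L (w ` G))"
  obtain q where "q \<in> Q" and "\<not> w q \<le> M"
    using unbounded unfolding bdd_above_def by blast
  moreover have "w q' \<le> M" if "q' \<in> G" for q'
    unfolding M_def using \<open>finite G\<close> that by simp
  moreover have "L \<le> M"
    unfolding M_def using \<open>finite G\<close> by simp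
  ultimately show ?thesis
    unfolding G_def by force
qed

lemma greedy_avoiding_sequence:
  fixes Q :: "('a \<times> 'b) set" and w :: "'a \<times> 'b \<Rightarrow> real"
  assumes avoid: "\<And>A B (n :: nat). finite A \<Longrightarrow> finite B \<Longrightarrow> \<exists>q\<in>Q. fst q \<notin> A \<and> snd q \<notin> B \<and> real n \<le> w q"
  obtains p where "\<And>n. p n \<in> Q" and "\<And>n. real n \<le> w (p n)"
    and "\<And>m n. m < n \<Longrightarrow> fst (p m) \<noteq> fst (p n) \<and> snd (p m) \<noteq> snd (p n)"
proof -
  define pick where "pick ps n = (SOME q. q \<in> Q \<and> fst q \<notin> fst ` set ps \<and> snd q \<notin> snd ` set ps \<and> real n \<le> w q)"
    for ps :: "('a \<times> 'b) list" and n :: nat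
  have pick: "pick ps n \<in> Q \<and> fst (pick ps n) \<notin> fst ` set ps \<and> snd (pick ps n) \<notin> snd ` set ps
      \<and> real n \<le> w (pick ps n)" for ps n
  proof -
    have "\<exists>q. q \<in> Q \<and> fst q \<notin> fst ` set ps \<and> snd q \<notin> snd ` set ps \<and> real n \<le> w q"
      using avoid[of "fst ` set ps" "snd ` set ps" n] by blast
    then show ?thesis
      unfolding pick_def by (rule someI_ex)
  qed
  define prefix where "prefix = rec_nat [] (\<lambda>n ps. pick ps n # ps)"
  define p where "p n = pick (prefix n) n" for n
  have "set (prefix n) = p ` {..<n}" for n
    by (induction n) (auto simp: prefix_def p_def lessThan_Suc)
  then have p: "p n \<in> Q" "fst (p n) \<notin> fst ` p ` {..<n}" "snd (p n) \<notin> snd ` p ` {..<n}" "real n \<le> w (p n)"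
    for n
    using pick[of "prefix n" n] unfolding p_def by auto
  have "fst (p m) \<noteq> fst (p n) \<and> snd (p m) \<noteq> snd (p n)" if "m < n" for m n
  proof -
    have "fst (p m) \<in> fst ` p ` {..<n}" and "snd (p m) \<in> snd ` p ` {..<n}"
      using that by simp_all
    then show ?thesis
      using p(2,3)[of n] by auto
  qed
  with p(1,4) show ?thesis
    by (rule that)
qed

lemma unbounded_matching:
  fixes Q :: "('a \<times> 'b) set" and w :: "'a \<times> 'b \<Rightarrow> real"
  assumes rows: "\<And>a. finite {b. (a, b) \<in> Q}" and columns: "\<And>b. finite {a. (a, b) \<in> Q}"
    and unbounded: "\<not> bdd_above (w ` Q)"
  obtains P where "P \<subseteq> Q" and "inj_on fst P" and "inj_on snd P" and "\<not> bdd_above (w ` P)"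
proof -
  obtain p where p: "\<And>n. p n \<in> Q" and large: "\<And>n. real n \<le> w (p n)"
    and later: "\<And>m n. m < n \<Longrightarrow> fst (p m) \<noteq> fst (p n) \<and> snd (p m) \<noteq> snd (p n)"
    using greedy_avoiding_sequence[OF exists_far_pair_avoiding[OF rows columns unbounded]] by blast
  have "m = n" if "fst (p m) = fst (p n) \<or> snd (p m) = snd (p n)" for m n
    using later[of m n] later[of n m] that by (cases m n rule: linorder_cases) auto
  then have "inj_on fst (range p)" and "inj_on snd (range p)"
    unfolding inj_on_def by blast+
  moreover have "\<not> bdd_above (w ` range p)"
  proof
    assume "bdd_above (w ` range p)"
    then obtain M where M: "w (p n) \<le> M" for n
      by (auto simp: bdd_above_def)
    obtain n where "M < real n"
      using reals_Archimedean2 by blast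
    then show False
      using M[of n] large[of n] by linarith
  qed
  ultimately show ?thesis
    using p by (intro that[of "range p"]) auto
qed

lemma metric_on_triangle_through:
  assumes "metric_on S d" and "a \<in> S" and "b \<in> S" and "c \<in> S"
  shows "d b c \<le> d a b + d a c"
proof -
  have "d b c \<le> d b a + d a c" and "d b a = d a b"
    using assms unfolding metric_on_def by blast+
  then show ?thesis
    by simp
qed

lemma Dmetrics_nonneg:
  assumes "d \<in> Dmetrics X dX Y dY" and "x \<in> X" and "y \<in> Y"
  shows "0 \<le> d (Inl x) (Inr y)"
  using assms unfolding Dmetrics_def metric_on_def by blast

lemma Dmetrics_finite_row:
  assumes d: "d \<in> Dmetrics X dX Y dY" and proper: "proper_on Y dY" and "x \<in> X"
  shows "finite {y \<in> Y. d (Inl x) (Inr y) \<le> t}"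
proof (cases "\<exists>y\<^sub>0\<in>Y. d (Inl x) (Inr y\<^sub>0) \<le> t")
  case True
  then obtain y\<^sub>0 where "y\<^sub>0 \<in> Y" and y\<^sub>0: "d (Inl x) (Inr y\<^sub>0) \<le> t" ..
  have "dY y\<^sub>0 y \<le> 2 * t" if "y \<in> Y" and "d (Inl x) (Inr y) \<le> t" for y
  proof -
    have "d (Inr y\<^sub>0) (Inr y) \<le> d (Inl x) (Inr y\<^sub>0) + d (Inl x) (Inr y)"
      using d \<open>x \<in> X\<close> \<open>y\<^sub>0 \<in> Y\<close> \<open>y \<in> Y\<close> unfolding Dmetrics_def
      by (intro metric_on_triangle_through[of "Inl ` X \<union> Inr ` Y"]) auto
    then show ?thesis
      using d \<open>y\<^sub>0 \<in> Y\<close> \<open>y \<in> Y\<close> y\<^sub>0 that(2) unfolding Dmetrics_def by auto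
  qed
  then have "{y \<in> Y. d (Inl x) (Inr y) \<le> t} \<subseteq> {y \<in> Y. dY y\<^sub>0 y \<le> 2 * t}"
    by blast
  moreover have "finite {y \<in> Y. dY y\<^sub>0 y \<le> 2 * t}"
    using proper \<open>y\<^sub>0 \<in> Y\<close> unfolding proper_on_def by blast
  ultimately show ?thesis
    by (rule finite_subset)
next
  case False
  then have "{y \<in> Y. d (Inl x) (Inr y) \<le> t} = {}"
    by blast
  then show ?thesis
    by (simp only: finite.emptyI)
qed

lemma Dmetrics_finite_column:
  assumes d: "d \<in> Dmetrics X dX Y dY" and proper: "proper_on X dX" and "y \<in> Y"
  shows "finite {x \<in> X. d (Inl x) (Inr y) \<le> t}"
proof (cases "\<exists>x\<^sub>0\<in>X. d (Inl x\<^sub>0) (Inr y) \<le> t")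
  case True
  then obtain x\<^sub>0 where "x\<^sub>0 \<in> X" and x\<^sub>0: "d (Inl x\<^sub>0) (Inr y) \<le> t" ..
  have "dX x\<^sub>0 x \<le> 2 * t" if "x \<in> X" and "d (Inl x) (Inr y) \<le> t" for x
  proof -
    have "d (Inl x\<^sub>0) (Inl x) \<le> d (Inr y) (Inl x\<^sub>0) + d (Inr y) (Inl x)"
      using d \<open>y \<in> Y\<close> \<open>x\<^sub>0 \<in> X\<close> \<open>x \<in> X\<close> unfolding Dmetrics_def
      by (intro metric_on_triangle_through[of "Inl ` X \<union> Inr ` Y"]) auto
    moreover have "d (Inr y) (Inl x\<^sub>0) = d (Inl x\<^sub>0) (Inr y)" and "d (Inr y) (Inl x) = d (Inl x) (Inr y)"
      using d \<open>y \<in> Y\<close> \<open>x\<^sub>0 \<in> X\<close> \<open>x \<in> X\<close> unfolding Dmetrics_def metric_on_def by blast+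
    ultimately show ?thesis
      using d \<open>x\<^sub>0 \<in> X\<close> \<open>x \<in> X\<close> x\<^sub>0 that(2) unfolding Dmetrics_def by auto
  qed
  then have "{x \<in> X. d (Inl x) (Inr y) \<le> t} \<subseteq> {x \<in> X. dX x\<^sub>0 x \<le> 2 * t}"
    by blast
  moreover have "finite {x \<in> X. dX x\<^sub>0 x \<le> 2 * t}"
    using proper \<open>x\<^sub>0 \<in> X\<close> unfolding proper_on_def by blast
  ultimately show ?thesis
    by (rule finite_subset)
next
  case False
  then have "{x \<in> X. d (Inl x) (Inr y) \<le> t} = {}"
    by blast
  then show ?thesis
    by (simp only: finite.emptyI)
qed

definition cross_dist :: "('a + 'b \<Rightarrow> 'a + 'b \<Rightarrow> real) \<Rightarrow> 'a \<times> 'b \<Rightarrow> real" where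
  "cross_dist d = (\<lambda>(x, y). d (Inl x) (Inr y))"

lemma cross_dist_Pair [simp]: "cross_dist d (x, y) = d (Inl x) (Inr y)"
  by (simp add: cross_dist_def)

lemma finite_propagation_if_controlled:
  assumes mono: "mono_on {0..} \<phi>" and control: "\<And>q. q \<in> X \<times> Y \<Longrightarrow> cross_dist d' q \<le> \<phi> (cross_dist d q)"
    and nonneg: "\<And>q. q \<in> X \<times> Y \<Longrightarrow> 0 \<le> cross_dist d q"
    and "finite_propagation X Y d T"
  shows "finite_propagation X Y d' T"
proof -
  obtain L where L: "\<forall>x\<in>X. \<forall>y\<in>Y. L \<le> d (Inl x) (Inr y) \<longrightarrow> T y x = 0"
    using \<open>finite_propagation X Y d T\<close> unfolding finite_propagation_def by blast
  have "T y x = 0" if "x \<in> X" "y \<in> Y" and far: "\<phi> (max L 0) + 1 \<le> d' (Inl x) (Inr y)" for x y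
  proof (rule ccontr)
    assume "T y x \<noteq> 0"
    then have "d (Inl x) (Inr y) \<le> max L 0"
      using L that by force
    then have "\<phi> (d (Inl x) (Inr y)) \<le> \<phi> (max L 0)"
      using mono nonneg[of "(x, y)"] that unfolding mono_on_def by simp
    then show False
      using control[of "(x, y)"] that by simp
  qed
  then show ?thesis
    unfolding finite_propagation_def by blast
qed

lemma Md_eq_if_coarsely_equivalent:
  assumes "coarsely_equivalent X Y d d'"
    and d: "d \<in> Dmetrics X dX Y dY" and d': "d' \<in> Dmetrics X dX Y dY"
  shows "Md X Y d' = Md X Y d"
proof -
  obtain \<phi> :: "real \<Rightarrow> real" where "mono_on {0..} \<phi>"
    and "\<And>q. q \<in> X \<times> Y \<Longrightarrow> cross_dist d' q \<le> \<phi> (cross_dist d q)"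
    and "\<And>q. q \<in> X \<times> Y \<Longrightarrow> cross_dist d q \<le> \<phi> (cross_dist d' q)"
    using assms(1) unfolding coarsely_equivalent_def by auto
  moreover have "\<And>q. q \<in> X \<times> Y \<Longrightarrow> 0 \<le> cross_dist d q" and "\<And>q. q \<in> X \<times> Y \<Longrightarrow> 0 \<le> cross_dist d' q"
    using Dmetrics_nonneg[OF d] Dmetrics_nonneg[OF d'] by auto
  ultimately have "finite_propagation X Y d T \<longleftrightarrow> finite_propagation X Y d' T" for T
    using finite_propagation_if_controlled by metis
  then show ?thesis
    unfolding Md_def by simp
qed

lemma bdd_above_if_Md_subset:
  assumes d: "d \<in> Dmetrics X dX Y dY" and "proper_on X dX" and "proper_on Y dY"
    and "Md X Y d \<subseteq> Md X Y d'"
  shows "bdd_above (cross_dist d' ` {q \<in> X \<times> Y. cross_dist d q \<le> t})"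
proof (rule ccontr)
  define Q where "Q = {q \<in> X \<times> Y. cross_dist d q \<le> t}"
  assume "\<not> bdd_above (cross_dist d' ` {q \<in> X \<times> Y. cross_dist d q \<le> t})"
  then have unbounded_Q: "\<not> bdd_above (cross_dist d' ` Q)"
    unfolding Q_def .
  have rows: "finite {y. (x, y) \<in> Q}" for x
    using Dmetrics_finite_row[OF d \<open>proper_on Y dY\<close>, of x t] by (cases "x \<in> X") (auto simp: Q_def)
  have columns: "finite {x. (x, y) \<in> Q}" for y
    using Dmetrics_finite_column[OF d \<open>proper_on X dX\<close>, of y t] by (cases "y \<in> Y") (auto simp: Q_def)
  obtain P where "P \<subseteq> Q" and "inj_on fst P" and "inj_on snd P"
    and unbounded: "\<not> bdd_above (cross_dist d' ` P)"
    by (rule unbounded_matching[OF rows columns unbounded_Q])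
  then have "P \<subseteq> X \<times> Y"
    unfolding Q_def by auto
  have "finite_propagation X Y d (matching_op P)"
    unfolding finite_propagation_def matching_op_def
    using \<open>P \<subseteq> Q\<close> by (intro exI[of _ "t + 1"]) (auto simp: Q_def)
  then have "matching_op P \<in> Md X Y d'"
    using assms(4) finite_propagation_in_Md bounded_matching_op[OF \<open>P \<subseteq> X \<times> Y\<close> \<open>inj_on fst P\<close> \<open>inj_on snd P\<close>]
    by blast
  then obtain L where L: "\<And>x y. x \<in> X \<Longrightarrow> y \<in> Y \<Longrightarrow> L \<le> d' (Inl x) (Inr y) \<Longrightarrow> cmod (matching_op P y x) < 1"
    by (rule Md_entries_decay[where e = 1]) auto
  obtain q where "q \<in> P" and "\<not> cross_dist d' q \<le> L"
    using unbounded unfolding bdd_above_def by blast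
  then show False
    using L[of "fst q" "snd q"] \<open>P \<subseteq> X \<times> Y\<close> unfolding matching_op_def by (cases q) auto
qed

lemma coarsely_equivalent_if_bdd_above:
  assumes "\<And>t. bdd_above (cross_dist d' ` {q \<in> X \<times> Y. cross_dist d q \<le> t})"
    and "\<And>t. bdd_above (cross_dist d ` {q \<in> X \<times> Y. cross_dist d' q \<le> t})"
  shows "coarsely_equivalent X Y d d'"
proof -
  define B where "B t = insert 0 (cross_dist d' ` {q \<in> X \<times> Y. cross_dist d q \<le> t}
      \<union> cross_dist d ` {q \<in> X \<times> Y. cross_dist d' q \<le> t})" for t
  have bdd: "bdd_above (B t)" for t
    unfolding B_def using assms by auto
  have upper: "v \<le> Sup (B t)" if "v \<in> B t" for v t
    using cSup_upper[OF that bdd] .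
  have "mono_on {0..} (\<lambda>t. Sup (B t))"
  proof (rule mono_onI)
    fix r s :: real
    assume "r \<le> s"
    then have "B r \<subseteq> B s"
      unfolding B_def by auto
    then show "Sup (B r) \<le> Sup (B s)"
      using bdd by (intro cSup_subset_mono) (auto simp: B_def)
  qed
  moreover have "0 \<le> Sup (B t)" for t
    by (rule upper) (simp add: B_def)
  moreover have "d' (Inl x) (Inr y) \<in> B (d (Inl x) (Inr y))"
    and "d (Inl x) (Inr y) \<in> B (d' (Inl x) (Inr y))" if "x \<in> X" "y \<in> Y" for x y
    unfolding B_def using that by (force intro: image_eqI[of _ _ "(x, y)"])+
  ultimately show ?thesis
    unfolding coarsely_equivalent_def by (blast intro: upper)
qed

theorem mainTheorem4:
  fixes X :: "'a set" and Y :: "'b set"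
    and dX :: "'a \<Rightarrow> 'a \<Rightarrow> real" and dY :: "'b \<Rightarrow> 'b \<Rightarrow> real"
    and d d' :: "('a + 'b) \<Rightarrow> ('a + 'b) \<Rightarrow> real"
  assumes "countable X" and "countable Y"
    and "discrete_metric_on X dX" and "discrete_metric_on Y dY"
    and "d \<in> Dmetrics X dX Y dY" and "d' \<in> Dmetrics X dX Y dY"
  shows "(coarsely_equivalent X Y d d' \<longrightarrow> Md X Y d' = Md X Y d)
       \<and> (uniformly_discrete_on X dX \<and> uniformly_discrete_on Y dY \<and>
          proper_on X dX \<and> proper_on Y dY \<longrightarrow>
          Md X Y d' = Md X Y d \<longrightarrow> coarsely_equivalent X Y d d')"
proof (intro conjI impI)
  show "Md X Y d' = Md X Y d" if "coarsely_equivalent X Y d d'"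
    using Md_eq_if_coarsely_equivalent[OF that assms(5,6)] .
next
  assume "uniformly_discrete_on X dX \<and> uniformly_discrete_on Y dY \<and> proper_on X dX \<and> proper_on Y dY"
    and "Md X Y d' = Md X Y d"
  then have "proper_on X dX" "proper_on Y dY" "Md X Y d \<subseteq> Md X Y d'" "Md X Y d' \<subseteq> Md X Y d"
    by auto
  then show "coarsely_equivalent X Y d d'"
    using bdd_above_if_Md_subset[OF assms(5)] bdd_above_if_Md_subset[OF assms(6)]
    by (intro coarsely_equivalent_if_bdd_above)
qed

end
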